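(* A finitely generated group $G$ admits a regular-preimage left-order if and only if $G$ is trivial.
   Context: A finite generating set of $G$ is a finite set $X$ with a surjective monoid homomorphism $\pi\colon X^*\to G$. For a class $\mathcal{C}$ of languages, a left-order $\prec$ on $G$ with positive cone $P=\{g:1\prec g\}$ is a $\mathcal{C}$-preimage left-order if, for a finite generating set $(X,\pi)$ of $G$, the full preimage $\pi^{-1}(P)\subseteq X^*$ belongs to $\mathcal{C}$. Regular-preimage means $\mathcal{C}$ is the class of languages accepted by finite state automata. *)

theory Defs
  imports "HOL-Algebra.Generated_Groups"
begin

definition finitely_generated :: "('g, 'b) monoid_scheme \<Rightarrow> bool" where
  "finitely_generated G \<longleftrightarrow>
     (\<exists>S. finite S \<and> S \<subseteq> carrier G \<and> generate G S = carrier G)"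

definition left_order :: "('g, 'b) monoid_scheme \<Rightarrow> ('g \<Rightarrow> 'g \<Rightarrow> bool) \<Rightarrow> bool" where
  "left_order G R \<longleftrightarrow>
     (\<forall>a\<in>carrier G. \<not> R a a) \<and>
     (\<forall>a\<in>carrier G. \<forall>b\<in>carrier G. \<forall>c\<in>carrier G. R a b \<longrightarrow> R b c \<longrightarrow> R a c) \<and>
     (\<forall>a\<in>carrier G. \<forall>b\<in>carrier G. a \<noteq> b \<longrightarrow> R a b \<or> R b a) \<and>
     (\<forall>g\<in>carrier G. \<forall>a\<in>carrier G. \<forall>b\<in>carrier G. R a b \<longrightarrow> R (g \<otimes>\<^bsub>G\<^esub> a) (g \<otimes>\<^bsub>G\<^esub> b))"

definition positive_cone :: "('g, 'b) monoid_scheme \<Rightarrow> ('g \<Rightarrow> 'g \<Rightarrow> bool) \<Rightarrow> 'g set" where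
  "positive_cone G R = {g \<in> carrier G. R \<one>\<^bsub>G\<^esub> g}"

definition word_eval :: "('g, 'b) monoid_scheme \<Rightarrow> ('x \<Rightarrow> 'g) \<Rightarrow> 'x list \<Rightarrow> 'g" where
  "word_eval G \<pi> w = foldr (\<lambda>x a. \<pi> x \<otimes>\<^bsub>G\<^esub> a) w \<one>\<^bsub>G\<^esub>"

definition finite_generating_set :: "('g, 'b) monoid_scheme \<Rightarrow> 'x set \<Rightarrow> ('x \<Rightarrow> 'g) \<Rightarrow> bool" where
  "finite_generating_set G X \<pi> \<longleftrightarrow>
     finite X \<and> (\<forall>x\<in>X. \<pi> x \<in> carrier G) \<and> word_eval G \<pi> ` lists X = carrier G"

definition regular_lang :: "'x set \<Rightarrow> 'x list set \<Rightarrow> bool" where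
  "regular_lang X L \<longleftrightarrow>
     (\<exists>(Q :: nat set) q0 \<delta> F. finite Q \<and> q0 \<in> Q \<and> (\<forall>q\<in>Q. \<forall>x\<in>X. \<delta> q x \<in> Q) \<and> F \<subseteq> Q \<and>
        L = {w \<in> lists X. foldl \<delta> q0 w \<in> F})"

definition regular_preimage_left_order :: "('g, 'b) monoid_scheme \<Rightarrow> ('g \<Rightarrow> 'g \<Rightarrow> bool) \<Rightarrow> bool" where
  "regular_preimage_left_order G R \<longleftrightarrow> left_order G R \<and>
     (\<exists>(X :: nat set) \<pi>. finite_generating_set G X \<pi> \<and>
        regular_lang X {w \<in> lists X. word_eval G \<pi> w \<in> positive_cone G R})"

end

theory Submission
  imports Defs
begin

text \<open>
  Let \<open>P\<close> be the positive cone and \<open>\<pi>\<close> the evaluation of words. If a finite automaton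
  recognises the preimage of \<open>P\<close>, any two words \<open>u\<close>, \<open>v\<close> ending in the same state satisfy
  \<open>\<pi> u h \<in> P \<longleftrightarrow> \<pi> v h \<in> P\<close> for all \<open>h\<close>. Taking \<open>h = (\<pi> u)\<inverse>\<close> and \<open>h = (\<pi> v)\<inverse>\<close> shows that
  neither \<open>\<pi> v (\<pi> u)\<inverse>\<close> nor its inverse is positive, so \<open>\<pi> u = \<pi> v\<close>: the group has at most
  as many elements as the automaton has states. In a finite left-ordered group a maximal element
  \<open>m\<close> and any \<open>g > 1\<close> would give \<open>m < m g\<close>, so no \<open>g > 1\<close> exists and the group is trivial.
  Conversely, on the trivial group the empty order is recognised by a one-state automaton over
  the empty alphabet.
\<close>

lemma finite_image_if_factors:
  assumes "finite (f ` A)" and "\<And>x y. x \<in> A \<Longrightarrow> y \<in> A \<Longrightarrow> f x = f y \<Longrightarrow> g x = g y"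
  shows "finite (g ` A)"
proof -
  have "g x = g (inv_into A f (f x))" if "x \<in> A" for x
    using that by (intro assms(2)) (auto simp: inv_into_into f_inv_into_f)
  then have "g ` A \<subseteq> (\<lambda>y. g (inv_into A f y)) ` f ` A"
    by auto
  then show ?thesis
    by (rule finite_surj[OF assms(1)])
qed

lemma finite_strict_order_has_maximal:
  assumes "finite A" and "A \<noteq> {}"
    and R_irrefl: "\<And>a. a \<in> A \<Longrightarrow> \<not> R a a"
    and R_trans: "\<And>a b c. a \<in> A \<Longrightarrow> b \<in> A \<Longrightarrow> c \<in> A \<Longrightarrow> R a b \<Longrightarrow> R b c \<Longrightarrow> R a c"
  obtains m where "m \<in> A" and "\<And>b. b \<in> A \<Longrightarrow> \<not> R m b"
proof -
  define r where "r = {(b, a). a \<in> A \<and> b \<in> A \<and> R a b}"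
  have "r \<subseteq> A \<times> A"
    by (auto simp: r_def)
  then have "finite r"
    using assms(1) by (simp add: finite_subset)
  moreover have "trans r"
    using R_trans by (auto simp: r_def intro: transI)
  then have "acyclic r"
    using R_irrefl by (auto simp: acyclic_irrefl trancl_id irrefl_def r_def)
  ultimately have "wf r"
    by (rule finite_acyclic_wf)
  moreover obtain a where "a \<in> A"
    using assms(2) by blast
  ultimately have "\<exists>m\<in>A. \<forall>b. (b, m) \<in> r \<longrightarrow> b \<notin> A"
    unfolding wf_eq_minimal by blast
  then show ?thesis
    using that by (auto simp: r_def)
qed

lemma regular_lang_finite_right_congruence:
  assumes "regular_lang X L"
  obtains f :: "'x list \<Rightarrow> nat" where "finite (f ` lists X)"
    and "\<And>u v z. u \<in> lists X \<Longrightarrow> v \<in> lists X \<Longrightarrow> z \<in> lists X \<Longrightarrow> f u = f v \<Longrightarrow>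
           u @ z \<in> L \<longleftrightarrow> v @ z \<in> L"
proof -
  obtain Q :: "nat set" and q0 \<delta> F where "finite Q" "q0 \<in> Q" and \<delta>: "\<forall>q\<in>Q. \<forall>x\<in>X. \<delta> q x \<in> Q"
    and L: "L = {w \<in> lists X. foldl \<delta> q0 w \<in> F}"
    using assms unfolding regular_lang_def by blast
  have "foldl \<delta> q u \<in> Q" if "q \<in> Q" "u \<in> lists X" for q u
    using that \<delta> by (induction u arbitrary: q rule: rev_induct) auto
  then have "foldl \<delta> q0 ` lists X \<subseteq> Q"
    using \<open>q0 \<in> Q\<close> by blast
  then show ?thesis
    using \<open>finite Q\<close> by (intro that[of "foldl \<delta> q0"]) (auto simp: L finite_subset)
qed

lemma
  assumes "left_order G R"
  shows left_order_irrefl: "a \<in> carrier G \<Longrightarrow> \<not> R a a"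
    and left_order_trans: "\<lbrakk>a \<in> carrier G; b \<in> carrier G; c \<in> carrier G; R a b; R b c\<rbrakk> \<Longrightarrow> R a c"
    and left_order_total: "\<lbrakk>a \<in> carrier G; b \<in> carrier G; a \<noteq> b\<rbrakk> \<Longrightarrow> R a b \<or> R b a"
    and left_order_mult_left:
      "\<lbrakk>g \<in> carrier G; a \<in> carrier G; b \<in> carrier G; R a b\<rbrakk> \<Longrightarrow> R (g \<otimes>\<^bsub>G\<^esub> a) (g \<otimes>\<^bsub>G\<^esub> b)"
  using assms unfolding left_order_def by blast+

context monoid
begin

lemma word_eval_closed:
  assumes "\<pi> ` X \<subseteq> carrier G" and "u \<in> lists X"
  shows "word_eval G \<pi> u \<in> carrier G"
  using assms(2) by (induction u) (use assms(1) in \<open>auto simp: word_eval_def\<close>)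

lemma word_eval_append:
  assumes "\<pi> ` X \<subseteq> carrier G" and "u \<in> lists X" and "v \<in> lists X"
  shows "word_eval G \<pi> (u @ v) = word_eval G \<pi> u \<otimes> word_eval G \<pi> v"
  using assms(2)
proof (induction u)
  case Nil
  then show ?case
    using word_eval_closed[OF assms(1,3)] by (simp add: word_eval_def)
next
  case (Cons x u)
  then show ?case
    using assms word_eval_closed[OF assms(1)] by (simp add: word_eval_def m_assoc image_subset_iff)
qed

end

context group
begin

lemma left_order_positive_or_inv_positive:
  assumes "left_order G R" and "a \<in> carrier G" and "a \<noteq> \<one>"
  shows "R \<one> a \<or> R \<one> (inv a)"
proof -
  have "R \<one> a \<or> R a \<one>"
    using left_order_total[OF assms(1)] assms(2,3) by (metis one_closed)
  moreover have "R \<one> (inv a)" if "R a \<one>"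
    using left_order_mult_left[OF assms(1) inv_closed[OF assms(2)] assms(2) one_closed that]
      assms(2) by simp
  ultimately show ?thesis
    by blast
qed

lemma left_order_eq_if_same_cone_translates:
  assumes "left_order G R" and g: "g \<in> carrier G" and k: "k \<in> carrier G"
    and same: "\<And>h. h \<in> carrier G \<Longrightarrow> g \<otimes> h \<in> positive_cone G R \<longleftrightarrow> k \<otimes> h \<in> positive_cone G R"
  shows "g = k"
proof (rule ccontr)
  assume "g \<noteq> k"
  then have "k \<otimes> inv g \<noteq> \<one>"
    using g k by (metis inv_closed inv_equality inv_inv)
  then have "k \<otimes> inv g \<in> positive_cone G R \<or> inv (k \<otimes> inv g) \<in> positive_cone G R"
    using left_order_positive_or_inv_positive[OF assms(1)] g k by (simp add: positive_cone_def)
  moreover have "inv (k \<otimes> inv g) = g \<otimes> inv k"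
    using g k by (simp add: inv_mult_group)
  moreover have "\<one> \<notin> positive_cone G R"
    using left_order_irrefl[OF assms(1)] by (simp add: positive_cone_def)
  ultimately show False
    using same[of "inv g"] same[of "inv k"] g k by auto
qed

lemma finite_left_ordered_group_trivial:
  assumes "left_order G R" and "finite (carrier G)"
  shows "carrier G = {\<one>}"
proof (rule ccontr)
  assume "carrier G \<noteq> {\<one>}"
  then obtain x where x: "x \<in> carrier G" "x \<noteq> \<one>"
    by blast
  then have "R \<one> x \<or> R \<one> (inv x)"
    by (rule left_order_positive_or_inv_positive[OF assms(1)])
  then obtain g where g: "g \<in> carrier G" "R \<one> g"
    using x(1) inv_closed[OF x(1)] by blast
  obtain m where m: "m \<in> carrier G" and max: "\<And>b. b \<in> carrier G \<Longrightarrow> \<not> R m b"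
  proof (rule finite_strict_order_has_maximal[of "carrier G" R])
    show "finite (carrier G)" and "carrier G \<noteq> {}"
      using assms(2) g(1) by auto
    show "\<not> R a a" if "a \<in> carrier G" for a
      using left_order_irrefl[OF assms(1) that] .
    show "R a c" if "a \<in> carrier G" "b \<in> carrier G" "c \<in> carrier G" "R a b" "R b c" for a b c
      using left_order_trans[OF assms(1) that] .
  qed (rule that)
  have "R (m \<otimes> \<one>) (m \<otimes> g)"
    using left_order_mult_left[OF assms(1) m _ g] by simp
  then show False
    using max[of "m \<otimes> g"] m g by simp
qed

lemma regular_preimage_left_order_finite:
  assumes "regular_preimage_left_order G R"
  shows "finite (carrier G)"
proof -
  obtain X :: "nat set" and \<pi> where lo: "left_order G R"
    and gen: "finite_generating_set G X \<pi>"
    and reg: "regular_lang X {w \<in> lists X. word_eval G \<pi> w \<in> positive_cone G R}"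
    using assms unfolding regular_preimage_left_order_def by blast
  from gen have \<pi>: "\<pi> ` X \<subseteq> carrier G" and onto: "word_eval G \<pi> ` lists X = carrier G"
    unfolding finite_generating_set_def by blast+
  obtain f :: "nat list \<Rightarrow> nat" where fin: "finite (f ` lists X)"
    and congr: "\<And>u v z. u \<in> lists X \<Longrightarrow> v \<in> lists X \<Longrightarrow> z \<in> lists X \<Longrightarrow> f u = f v \<Longrightarrow>
      u @ z \<in> {w \<in> lists X. word_eval G \<pi> w \<in> positive_cone G R} \<longleftrightarrow>
      v @ z \<in> {w \<in> lists X. word_eval G \<pi> w \<in> positive_cone G R}"
    by (fact regular_lang_finite_right_congruence[OF reg])
  have factors: "word_eval G \<pi> u = word_eval G \<pi> v"
    if u: "u \<in> lists X" and v: "v \<in> lists X" and "f u = f v" for u v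
  proof (rule left_order_eq_if_same_cone_translates[OF lo])
    fix h assume "h \<in> carrier G"
    then obtain z where "z \<in> lists X" and "h = word_eval G \<pi> z"
      using onto by blast
    then show "word_eval G \<pi> u \<otimes> h \<in> positive_cone G R \<longleftrightarrow>
               word_eval G \<pi> v \<otimes> h \<in> positive_cone G R"
      using congr[OF u v _ \<open>f u = f v\<close>] word_eval_append[OF \<pi>] u v by simp
  qed (simp_all add: word_eval_closed[OF \<pi>] u v)
  have "finite (word_eval G \<pi> ` lists X)"
    using fin factors by (rule finite_image_if_factors)
  then show ?thesis
    by (simp add: onto)
qed

lemma trivial_group_regular_preimage_left_order:
  assumes "carrier G = {\<one>}"
  shows "regular_preimage_left_order G (\<lambda>_ _. False)"
proof -
  have "left_order G (\<lambda>_ _. False)"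
    using assms by (simp add: left_order_def)
  moreover have "finite_generating_set G ({} :: nat set) (\<lambda>_. \<one>)"
    using assms by (simp add: finite_generating_set_def word_eval_def)
  moreover have "regular_lang ({} :: nat set) {w \<in> lists {}. word_eval G (\<lambda>_. \<one>) w \<in> positive_cone G (\<lambda>_ _. False)}"
    unfolding regular_lang_def positive_cone_def
    by (rule exI[of _ "{0}"], rule exI[of _ 0], rule exI[of _ "\<lambda>_ _. 0"], rule exI[of _ "{}"]) simp
  ultimately show ?thesis
    unfolding regular_preimage_left_order_def by blast
qed

end

theorem propositionA4:
  fixes G :: "('g, 'b) monoid_scheme"
  assumes "group G" and "finitely_generated G"
  shows "(\<exists>R. regular_preimage_left_order G R) \<longleftrightarrow> carrier G = {\<one>\<^bsub>G\<^esub>}"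
proof
  assume "\<exists>R. regular_preimage_left_order G R"
  then obtain R where "regular_preimage_left_order G R"
    by blast
  then have "left_order G R" and "finite (carrier G)"
    using group.regular_preimage_left_order_finite[OF assms(1)]
    unfolding regular_preimage_left_order_def by blast+
  then show "carrier G = {\<one>\<^bsub>G\<^esub>}"
    by (rule group.finite_left_ordered_group_trivial[OF assms(1)])
next
  assume "carrier G = {\<one>\<^bsub>G\<^esub>}"
  then show "\<exists>R. regular_preimage_left_order G R"
    using group.trivial_group_regular_preimage_left_order[OF assms(1)] by blast
qed

end
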